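(* Let $\mu$ be an admissible even probability measure on $\mathbb{R}$. Then, for any $\delta\in\left(0,\tfrac12\right)$ there exist $c(\mu,\delta)>0$ and $n_0(\mu,\delta)\in\mathbb{N}$ such that $$\varrho_1(\mu_n,\delta)\ge\left(1-\frac{c(\mu,\delta)}{\sqrt n}\right)\mathbb{E}_\mu(\Lambda_\mu^{\ast})$$ for all $n\ge n_0(\mu,\delta)$.
   Context: Let $X$ have distribution $\mu$. Write $x^{\ast}=\sup\{x\in\mathbb{R}:\mu([x,\infty))>0\}$ (possibly $+\infty$), $\Lambda_\mu(t)=\ln\int e^{tx}\,d\mu(x)$, $\Lambda_\mu^{\ast}(x)=\sup_{t\in\mathbb{R}}\{tx-\Lambda_\mu(t)\}$, and $\mathbb{E}_\mu(\Lambda_\mu^\ast)=\int\Lambda_\mu^\ast\,d\mu$. The measure $\mu$ is admissible if: $\mathrm{Var}(X)>0$; there is $r>0$ with $\mathbb{E}e^{tX}<\infty$ for $t\in(-r,r)$; if $x^{\ast}<\infty$ then $\mu(\{x^{\ast}\})=0$; and one of: (1) $x^{\ast}<\infty$, (2) $x^{\ast}=+\infty$ and $\{\Lambda_\mu<\infty\}=\mathbb{R}$, (3) $x^{\ast}=+\infty$, $\{\Lambda_\mu<\infty\}$ bounded and $\mu$ log-concave. Let $\mu_n=\mu^{\otimes n}$. For $N>n$ let $\vec X_1,\dots,\vec X_N$ be i.i.d. random vectors in $\mathbb{R}^n$ with distribution $\mu_n$ (joint law $\mu_n^N$) and $K_N=\mathrm{conv}\{\vec X_1,\dots,\vec X_N\}$.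 For $\delta\in(0,\tfrac12)$, $\varrho_1(\mu_n,\delta)=\sup\{\varrho_1:\sup\{\mathbb{E}_{\mu_n^N}[\mu_n(K_N)]:N\le\exp(\varrho_1 n)\}\le\delta\}$. *)

theory Defs
  imports "HOL-Probability.Probability"
begin

definition xstar :: "real measure \<Rightarrow> ereal" where
  "xstar \<mu> = Sup {ereal x | x. measure \<mu> {x..} > 0}"

definition Lambda :: "real measure \<Rightarrow> real \<Rightarrow> ereal" where
  "Lambda \<mu> t = (if integrable \<mu> (\<lambda>x. exp (t * x))
                   then ereal (ln (\<integral>x. exp (t * x) \<partial>\<mu>)) else \<infinity>)"

definition Lambda_star :: "real measure \<Rightarrow> real \<Rightarrow> ereal" where
  "Lambda_star \<mu> x = (SUP t. ereal (t * x) - Lambda \<mu> t)"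

definition E_Lambda_star :: "real measure \<Rightarrow> ereal" where
  "E_Lambda_star \<mu> = enn2ereal (\<integral>\<^sup>+ x. e2ennreal (Lambda_star \<mu> x) \<partial>\<mu>)"

definition log_concave_measure :: "real measure \<Rightarrow> bool" where
  "log_concave_measure \<mu> \<longleftrightarrow>
     (\<forall>A B l. compact A \<and> compact B \<and> A \<noteq> {} \<and> B \<noteq> {} \<and> 0 \<le> l \<and> l \<le> 1 \<longrightarrow>
        measure \<mu> {l * a + (1 - l) * b | a b. a \<in> A \<and> b \<in> B}
          \<ge> measure \<mu> A powr l * measure \<mu> B powr (1 - l))"

definition even_measure :: "real measure \<Rightarrow> bool" where
  "even_measure \<mu> \<longleftrightarrow> (\<forall>A \<in> sets borel. measure \<mu> (uminus ` A) = measure \<mu> A)"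

definition admissible :: "real measure \<Rightarrow> bool" where
  "admissible \<mu> \<longleftrightarrow>
     prob_space.variance \<mu> (\<lambda>x. x) > 0 \<and>
     (\<exists>r>0. \<forall>t. \<bar>t\<bar> < r \<longrightarrow> integrable \<mu> (\<lambda>x. exp (t * x))) \<and>
     (xstar \<mu> < \<infinity> \<longrightarrow> measure \<mu> {real_of_ereal (xstar \<mu>)} = 0) \<and>
     (xstar \<mu> < \<infinity>
      \<or> (xstar \<mu> = \<infinity> \<and> (\<forall>t. Lambda \<mu> t < \<infinity>))
      \<or> (xstar \<mu> = \<infinity> \<and> bounded {t. Lambda \<mu> t < \<infinity>} \<and> log_concave_measure \<mu>))"

(* mu_n = mu^{(x)n}, on the space {..<n} ->E UNIV (points of R^n as functions on {0..n-1}). *)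
definition mu_n :: "real measure \<Rightarrow> nat \<Rightarrow> (nat \<Rightarrow> real) measure" where
  "mu_n \<mu> n = PiM {..<n} (\<lambda>_. \<mu>)"

definition KN :: "nat \<Rightarrow> nat \<Rightarrow> (nat \<Rightarrow> nat \<Rightarrow> real) \<Rightarrow> (nat \<Rightarrow> real) set" where
  "KN n N X = {y \<in> PiE {..<n} (\<lambda>_. UNIV). \<exists>l::nat \<Rightarrow> real.
      (\<forall>i<N. 0 \<le> l i) \<and> (\<Sum>i<N. l i) = 1 \<and> (\<forall>j<n. y j = (\<Sum>i<N. l i * X i j))}"

definition EK :: "real measure \<Rightarrow> nat \<Rightarrow> nat \<Rightarrow> ennreal" where
  "EK \<mu> n N = (\<integral>\<^sup>+ X. emeasure (mu_n \<mu> n) (KN n N X) \<partial>(PiM {..<N} (\<lambda>_. mu_n \<mu> n)))"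

(* rho_1(mu_n, delta); the supremum over an empty range of N is 0. *)
definition rho1 :: "real measure \<Rightarrow> nat \<Rightarrow> real \<Rightarrow> ereal" where
  "rho1 \<mu> n \<delta> = Sup {ereal r | r.
      (SUP N \<in> {N. n < N \<and> real N \<le> exp (r * real n)}. EK \<mu> n N) \<le> ennreal \<delta>}"

end

theory Submission
  imports Defs
begin

(* If y lies in the convex hull K_N of X_1, ..., X_N, then for every slope vector T some X_i lies
   in the halfspace {x. T . (x - y) >= 0}. Taking for T_j a slope that (nearly) attains
   Lambda*(y_j), Chernoff's bound gives this halfspace mu_n-measure at most
   exp (- sum_j Lambda*(y_j)), so by Fubini
     E mu_n(K_N) <= mu_n {y. sum_j Lambda*(y_j) <= a} + N exp (- a).
   Since min (P(X <= v), P(X >= v)) <= exp (- Lambda*(v)), the variable Lambda*(X) has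
   exponential tails and hence a second moment bounded by an absolute constant; a Bernstein-type
   lower-tail bound then makes the first term at most delta/2 for a = n (E Lambda* - O(1/sqrt n)).
   Lambda* is replaced throughout by finite maxima over rational slopes, which are measurable
   and increase to it. *)

section \<open>Tails and Chernoff bounds\<close>

context real_distribution
begin

lemma borel_measurable_cdf [measurable]: "cdf M \<in> borel_measurable borel"
  by (intro borel_measurable_mono monoI cdf_nondecreasing)

lemma emeasure_cdf_le: "emeasure M {x. cdf M x \<le> p} \<le> ennreal p"
proof -
  define A where "A = {x. cdf M x \<le> p}"
  have down: "y \<in> A" if "x \<in> A" "y \<le> x" for x y
    using that cdf_nondecreasing[of y x] by (auto simp: A_def)
  consider "A = {}" | "A = UNIV" | b where "b \<notin> A" "A \<noteq> {}" by blast
  then show ?thesis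
  proof cases
    case 1 then show ?thesis by (simp add: A_def)
  next
    case 2
    have "\<forall>\<^sub>F x in at_top. cdf M x \<le> p"
      using 2 by (auto simp: A_def set_eq_iff intro!: always_eventually)
    then have "1 \<le> p" by (rule tendsto_upperbound[OF cdf_lim_at_top_prob]) simp
    then show ?thesis using 2 emeasure_space_1 by (simp add: A_def ennreal_ge_1)
  next
    case (3 b)
    have "bdd_above A" using down 3(1) by (meson bdd_above.I nle_le)
    define s where "s = Sup A"
    have "measure M {..<s} \<le> p"
    proof (rule tendsto_upperbound[OF cdf_at_left])
      have "x \<in> A" if "x < s" for x
        using less_cSupD[OF 3(2) that[unfolded s_def]] down by (meson less_imp_le)
      then show "\<forall>\<^sub>F x in at_left s. cdf M x \<le> p"
        by (intro eventually_at_leftI[of "s - 1"]) (auto simp: A_def)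
    qed simp
    have "A \<subseteq> {..s}"
      using cSup_upper[OF _ \<open>bdd_above A\<close>] by (auto simp: s_def)
    show ?thesis
    proof (cases "s \<in> A")
      case True
      then have "emeasure M A \<le> emeasure M {..s}" using \<open>A \<subseteq> {..s}\<close> by (intro emeasure_mono) auto
      also have "\<dots> \<le> ennreal p"
        using True by (simp add: A_def cdf_def emeasure_eq_measure ennreal_leI)
      finally show ?thesis by (simp add: A_def)
    next
      case False
      then have "emeasure M A \<le> emeasure M {..<s}"
        using \<open>A \<subseteq> {..s}\<close> by (intro emeasure_mono) (auto simp: order.order_iff_strict)
      also have "\<dots> \<le> ennreal p"
        using \<open>measure M {..<s} \<le> p\<close> by (simp add: emeasure_eq_measure ennreal_leI)
      finally show ?thesis by (simp add: A_def)
    qed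
  qed
qed

lemma emeasure_upper_tail_le: "emeasure M {x. measure M {x..} \<le> p} \<le> ennreal p"
proof -
  let ?R = "distr M borel uminus"
  interpret R: real_distribution ?R by simp
  have cdf_R: "cdf ?R x = measure M {-x..}" for x
  proof -
    have "cdf ?R x = measure M (uminus -` {..x} \<inter> space M)"
      unfolding cdf_def by (rule measure_distr) auto
    also have "uminus -` {..x} \<inter> space M = {-x..}" by auto
    finally show ?thesis .
  qed
  have "{x. measure M {x..} \<le> p} = uminus -` {x. cdf ?R x \<le> p}"
    by (auto simp: cdf_R)
  moreover have "{x. cdf ?R x \<le> p} \<in> sets borel"
    using R.borel_measurable_cdf by measurable
  ultimately have "emeasure M {x. measure M {x..} \<le> p} = emeasure ?R {x. cdf ?R x \<le> p}"
    by (simp add: emeasure_distr)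
  also have "\<dots> \<le> ennreal p" by (rule R.emeasure_cdf_le)
  finally show ?thesis .
qed

lemma borel_measurable_upper_tail [measurable]: "(\<lambda>v. measure M {v..}) \<in> borel_measurable borel"
proof -
  have "(\<lambda>v. - measure M {v..}) \<in> borel_measurable borel"
    by (intro borel_measurable_mono monoI) (simp add: finite_measure_mono)
  then show ?thesis using borel_measurable_uminus by fastforce
qed

definition min_tail :: "real \<Rightarrow> real" where
  "min_tail v = min (cdf M v) (measure M {v..})"

lemma borel_measurable_min_tail [measurable]: "min_tail \<in> borel_measurable borel"
  unfolding min_tail_def by measurable

lemma emeasure_min_tail_le:
  assumes "0 \<le> p"
  shows "emeasure M {v. min_tail v \<le> p} \<le> ennreal (2 * p)"
proof -
  have "{v. min_tail v \<le> p} = {x. cdf M x \<le> p} \<union> {x. measure M {x..} \<le> p}"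
    by (auto simp: min_tail_def)
  moreover have "{x. cdf M x \<le> p} \<in> sets M" "{x. measure M {x..} \<le> p} \<in> sets M"
    by measurable
  ultimately have "emeasure M {v. min_tail v \<le> p}
      \<le> emeasure M {x. cdf M x \<le> p} + emeasure M {x. measure M {x..} \<le> p}"
    by (simp add: emeasure_subadditive)
  also have "\<dots> \<le> ennreal p + ennreal p"
    by (intro add_mono emeasure_cdf_le emeasure_upper_tail_le)
  also have "\<dots> = ennreal (2 * p)"
    unfolding mult_2 by (rule ennreal_plus[symmetric, OF assms assms])
  finally show ?thesis .
qed

definition mgf_finite :: "real \<Rightarrow> bool" where
  "mgf_finite t \<longleftrightarrow> integrable M (\<lambda>x. exp (t * x))"

definition cgf :: "real \<Rightarrow> real" where
  "cgf t = ln (\<integral>x. exp (t * x) \<partial>M)"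

lemma Lambda_eq_cgf: "Lambda M t = (if mgf_finite t then ereal (cgf t) else \<infinity>)"
  by (simp add: Lambda_def mgf_finite_def cgf_def)

lemma mgf_finite_0: "mgf_finite 0" and cgf_0: "cgf 0 = 0"
  using prob_space by (simp_all add: mgf_finite_def cgf_def)

lemma integral_exp_pos:
  assumes "mgf_finite t"
  shows "0 < (\<integral>x. exp (t * x) \<partial>M)"
proof -
  have "(\<integral>x. exp (t * x) \<partial>M) \<noteq> 0"
    using integral_nonneg_eq_0_iff_AE[of M "\<lambda>x. exp (t * x)"] assms AE_False
    by (auto simp: mgf_finite_def)
  moreover have "0 \<le> (\<integral>x. exp (t * x) \<partial>M)" by simp
  ultimately show ?thesis by linarith
qed

lemma exp_cgf: "mgf_finite t \<Longrightarrow> exp (cgf t) = (\<integral>x. exp (t * x) \<partial>M)"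
  using integral_exp_pos by (simp add: cgf_def)

lemma nn_integral_exp_shift:
  assumes "mgf_finite t"
  shows "(\<integral>\<^sup>+z. ennreal (exp (t * (z - y))) \<partial>M) = ennreal (exp (- (t * y - cgf t)))"
proof -
  have shift: "exp (t * (z - y)) = exp (- (t * y)) * exp (t * z)" for z
    by (simp add: algebra_simps flip: exp_add)
  have "(\<integral>\<^sup>+z. ennreal (exp (t * (z - y))) \<partial>M) = ennreal (\<integral>z. exp (t * (z - y)) \<partial>M)"
    using assms unfolding shift mgf_finite_def by (intro nn_integral_eq_integral) auto
  also have "(\<integral>z. exp (t * (z - y)) \<partial>M) = exp (- (t * y - cgf t))"
    using exp_cgf[OF assms] by (simp add: shift exp_diff exp_minus field_simps)
  finally show ?thesis .
qed

lemma min_tail_le_exp: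
  assumes "mgf_finite t"
  shows "min_tail y \<le> exp (- (t * y - cgf t))"
proof -
  define A where "A = (if 0 \<le> t then {y..} else {..y})"
  have "emeasure M A = (\<integral>\<^sup>+z. indicator A z \<partial>M)" by (simp add: A_def)
  also have "\<dots> \<le> (\<integral>\<^sup>+z. ennreal (exp (t * (z - y))) \<partial>M)"
    by (intro nn_integral_mono) (auto simp: A_def indicator_def mult_nonpos_nonpos)
  finally have "measure M A \<le> exp (- (t * y - cgf t))"
    by (simp add: nn_integral_exp_shift[OF assms] emeasure_eq_measure)
  then show ?thesis by (auto simp: min_tail_def A_def cdf_def split: if_splits)
qed

end

section \<open>Second moments of functions with exponential tails\<close>

(* The sum over k of 16 * 4^k * 2 exp (- 4 k): where 4 k <= f < 4 k + 4 one has
   f^2 <= 16 * 4^k, and f >= 4 k only where the tail is at most exp (- 4 k). *)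
definition tail_moment_bound :: real where
  "tail_moment_bound = 32 / (1 - 4 / exp 4)"

lemma tail_moment_bound_ge_1: "1 \<le> tail_moment_bound"
proof -
  have "5 \<le> exp (4::real)" using exp_ge_add_one_self[of 4] by simp
  then show ?thesis by (simp add: tail_moment_bound_def field_simps)
qed

lemma square_le_pow4: "(real K + 1)\<^sup>2 \<le> 4 ^ K"
proof -
  have "real K + 1 \<le> 2 ^ K"
    using less_exp[of K]
    by (metis Suc_leI of_nat_Suc of_nat_le_iff of_nat_numeral of_nat_power add.commute)
  then have "(real K + 1)\<^sup>2 \<le> (2 ^ K)\<^sup>2" by (intro power_mono) simp_all
  then show ?thesis by (simp add: power2_eq_square flip: power_mult_distrib)
qed

context real_distribution
begin

lemma nn_integral_square_le_tail_moment_bound: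
  assumes nonneg: "\<And>v. 0 \<le> f v" and tail: "\<And>v. min_tail v \<le> exp (- f v)"
  shows "(\<integral>\<^sup>+v. ennreal ((f v)\<^sup>2) \<partial>M) \<le> ennreal tail_moment_bound"
proof -
  define B where "B k = {v. min_tail v \<le> exp (- (4 * real k))}" for k
  have B_sets [measurable]: "B k \<in> sets M" for k unfolding B_def by measurable
  have layers: "ennreal ((f v)\<^sup>2) \<le> (\<Sum>k. ennreal (16 * 4 ^ k) * indicator (B k) v)" for v
  proof -
    define K where "K = nat \<lfloor>f v / 4\<rfloor>"
    have "real K = of_int \<lfloor>f v / 4\<rfloor>" using nonneg[of v] by (simp add: K_def)
    then have K: "4 * real K \<le> f v" "f v < 4 * (real K + 1)"
      using floor_divide_lower[of 4 "f v"] floor_divide_upper[of 4 "f v"] by simp_all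
    then have "v \<in> B K" using tail[of v] by (auto simp: B_def intro: order_trans)
    have "(f v)\<^sup>2 \<le> (4 * (real K + 1))\<^sup>2" using K nonneg[of v] by (intro power_mono) simp_all
    also have "\<dots> = 16 * (real K + 1)\<^sup>2" by (simp add: power2_eq_square algebra_simps)
    also have "\<dots> \<le> 16 * 4 ^ K" using square_le_pow4[of K] by simp
    finally have "ennreal ((f v)\<^sup>2) \<le> ennreal (16 * 4 ^ K) * indicator (B K) v"
      using \<open>v \<in> B K\<close> by (simp add: ennreal_leI)
    also have "\<dots> \<le> (\<Sum>k. ennreal (16 * 4 ^ k) * indicator (B k) v)"
      using sum_le_suminf[OF summableI, of "{K}"] by simp
    finally show ?thesis .
  qed
  have "(\<integral>\<^sup>+v. ennreal ((f v)\<^sup>2) \<partial>M)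
      \<le> (\<integral>\<^sup>+v. (\<Sum>k. ennreal (16 * 4 ^ k) * indicator (B k) v) \<partial>M)"
    by (intro nn_integral_mono layers)
  also have "\<dots> = (\<Sum>k. ennreal (16 * 4 ^ k) * emeasure M (B k))"
    using B_sets
    by (subst nn_integral_suminf) (auto intro!: suminf_cong nn_integral_cmult_indicator)
  also have "\<dots> \<le> (\<Sum>k. ennreal (32 * (4 / exp 4) ^ k))"
  proof (intro suminf_le summableI)
    fix k
    have "exp (- (4 * real k)) = (1 / exp 4) ^ k"
      by (simp add: exp_minus power_one_over mult.commute inverse_eq_divide flip: exp_of_nat_mult)
    then have geom: "16 * 4 ^ k * (2 * exp (- (4 * real k))) = 32 * (4 / exp 4 :: real) ^ k"
      by (simp add: power_divide field_simps)
    have "ennreal (16 * 4 ^ k) * emeasure M (B k)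
        \<le> ennreal (16 * 4 ^ k) * ennreal (2 * exp (- (4 * real k)))"
      unfolding B_def by (intro mult_left_mono emeasure_min_tail_le) simp_all
    also have "\<dots> = ennreal (32 * (4 / exp 4) ^ k)"
      by (subst ennreal_mult[symmetric]) (simp_all only: geom zero_le_numeral zero_le_power
          mult_nonneg_nonneg exp_ge_zero)
    finally show "ennreal (16 * 4 ^ k) * emeasure M (B k) \<le> ennreal (32 * (4 / exp 4) ^ k)" .
  qed
  also have "\<dots> = ennreal tail_moment_bound"
  proof (rule suminf_ennreal_eq)
    have "norm (4 / exp 4 :: real) < 1" using exp_ge_add_one_self[of 4] by simp
    from sums_mult[OF geometric_sums[OF this], of 32]
    show "(\<lambda>k. 32 * (4 / exp 4) ^ k) sums tail_moment_bound"
      by (simp add: tail_moment_bound_def)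
  qed simp
  finally show ?thesis .
qed

end

section \<open>Approximating the Legendre transform by rational slopes\<close>

lemma ex_rational_multiple_between:
  fixes t b :: real
  assumes "b < 1"
  shows "\<exists>s. b < s \<and> s < 1 \<and> s * t \<in> \<rat>"
proof (cases t "0::real" rule: linorder_cases)
  case less
  obtain r where "r \<in> \<rat>" "t < r" "r < b * t"
    using Rats_dense_in_real[of t "b * t"] assms less by (auto simp: mult_less_cancel_right1)
  with less show ?thesis by (intro exI[of _ "r / t"]) (auto simp: field_simps)
next
  case equal
  then show ?thesis using assms by (intro exI[of _ "(b + 1) / 2"]) auto
next
  case greater
  obtain r where "r \<in> \<rat>" "b * t < r" "r < t"
    using Rats_dense_in_real[of "b * t" t] assms greater by (auto simp: mult_less_cancel_right1)
  with greater show ?thesis by (intro exI[of _ "r / t"]) (auto simp: field_simps)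
qed

lemma le_1_plus_square: "(x::real) \<le> 1 + x\<^sup>2"
proof -
  have "2 * x \<le> 1 + x\<^sup>2"
    using zero_le_power2[of "x - 1"] by (simp add: power2_eq_square algebra_simps)
  then show ?thesis using zero_le_power2[of x] by linarith
qed

definition rat_enum :: "nat \<Rightarrow> real" where
  "rat_enum = from_nat_into \<rat>"

lemma rat_enum_surj: "r \<in> \<rat> \<Longrightarrow> \<exists>k. rat_enum k = r"
  unfolding rat_enum_def by (rule from_nat_into_surj[OF countable_rat])

context real_distribution
begin

lemma cgf_scaled_le:
  assumes t: "mgf_finite t" and s: "0 \<le> s" "s \<le> 1"
  shows "mgf_finite (s * t)" "cgf (s * t) \<le> ln (1 - s + s * exp (cgf t))"
proof -
  have cvx: "exp (s * t * x) \<le> 1 - s + s * exp (t * x)" for x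
    using convex_onD[OF exp_convex, of s 0 "t * x"] s by (simp add: mult.assoc)
  have int: "integrable M (\<lambda>x. 1 - s + s * exp (t * x))"
    using t by (simp add: mgf_finite_def)
  show int_s: "mgf_finite (s * t)"
    unfolding mgf_finite_def
    by (rule Bochner_Integration.integrable_bound[OF int])
      (use cvx in \<open>auto intro!: AE_I2 order_trans[OF _ abs_ge_self]\<close>)
  have "(\<integral>x. exp (s * t * x) \<partial>M) \<le> (\<integral>x. 1 - s + s * exp (t * x) \<partial>M)"
    using int_s int cvx by (intro integral_mono) (auto simp: mgf_finite_def)
  also have "\<dots> = 1 - s + s * exp (cgf t)"
    using t prob_space by (simp add: exp_cgf mgf_finite_def)
  finally show "cgf (s * t) \<le> ln (1 - s + s * exp (cgf t))"
    unfolding cgf_def using integral_exp_pos[OF int_s] by simp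
qed

primrec Lstar_approx :: "nat \<Rightarrow> real \<Rightarrow> real" where
  "Lstar_approx 0 = (\<lambda>v. 0)"
| "Lstar_approx (Suc m) = (\<lambda>v.
     if mgf_finite (rat_enum m) \<and> Lstar_approx m v < rat_enum m * v - cgf (rat_enum m)
     then rat_enum m * v - cgf (rat_enum m) else Lstar_approx m v)"

primrec Lstar_slope :: "nat \<Rightarrow> real \<Rightarrow> real" where
  "Lstar_slope 0 = (\<lambda>v. 0)"
| "Lstar_slope (Suc m) = (\<lambda>v.
     if mgf_finite (rat_enum m) \<and> Lstar_approx m v < rat_enum m * v - cgf (rat_enum m)
     then rat_enum m else Lstar_slope m v)"

lemma Lstar_approx_attained:
  "mgf_finite (Lstar_slope m v) \<and> Lstar_approx m v = Lstar_slope m v * v - cgf (Lstar_slope m v)"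
  by (induction m) (auto simp: mgf_finite_0 cgf_0)

lemma Lstar_approx_nonneg: "0 \<le> Lstar_approx m v"
  by (induction m) auto

lemma incseq_Lstar_approx: "incseq (\<lambda>m. Lstar_approx m v)"
  by (intro incseq_SucI) simp

lemma borel_measurable_Lstar_approx [measurable]: "Lstar_approx m \<in> borel_measurable borel"
proof (induction m)
  case (Suc m)
  note [measurable] = Suc.IH
  show ?case unfolding Lstar_approx.simps by measurable
qed simp

lemma borel_measurable_Lstar_slope [measurable]: "Lstar_slope m \<in> borel_measurable borel"
proof (induction m)
  case (Suc m)
  note [measurable] = Suc.IH
  show ?case unfolding Lstar_slope.simps by measurable
qed simp

lemma min_tail_le_exp_Lstar_approx: "min_tail v \<le> exp (- Lstar_approx m v)"
proof -
  have "mgf_finite (Lstar_slope m v)"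
    and L: "Lstar_approx m v = Lstar_slope m v * v - cgf (Lstar_slope m v)"
    using Lstar_approx_attained by blast+
  from min_tail_le_exp[OF this(1)] show ?thesis unfolding L .
qed

lemma Lstar_approx_le_Lambda_star: "ereal (Lstar_approx m v) \<le> Lambda_star M v"
proof -
  let ?t = "Lstar_slope m v"
  have "ereal (Lstar_approx m v) = ereal (?t * v) - Lambda M ?t"
    using Lstar_approx_attained[of m v] by (simp add: Lambda_eq_cgf)
  also have "\<dots> \<le> Lambda_star M v" unfolding Lambda_star_def by (rule SUP_upper) simp
  finally show ?thesis .
qed

(* By convexity cgf (s t) <= ln (1 - s + s exp (cgf t)), which tends to cgf t as s tends to 1
   from below; and s can be chosen with s t rational. *)
lemma le_SUP_Lstar_approx:
  assumes t: "mgf_finite t"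
  shows "ereal (t * v - cgf t) \<le> (SUP m. ereal (Lstar_approx m v))"
proof -
  define \<phi> where "\<phi> s = s * t * v - ln (1 - s + s * exp (cgf t))" for s
  have "(\<phi> \<longlongrightarrow> \<phi> 1) (at_left 1)"
    unfolding \<phi>_def by (intro tendsto_intros) simp
  have *: "\<exists>m. a < Lstar_approx m v" if "a < t * v - cgf t" for a
  proof -
    have "\<forall>\<^sub>F s in at_left 1. a < \<phi> s"
      using order_tendstoD(1)[OF \<open>(\<phi> \<longlongrightarrow> \<phi> 1) (at_left 1)\<close>] that by (simp add: \<phi>_def)
    then obtain b where "b < 1" and b: "\<And>s. b < s \<Longrightarrow> s < 1 \<Longrightarrow> a < \<phi> s"
      unfolding eventually_at_left[OF zero_less_one] by blast
    obtain s where s: "max b 0 < s" "s < 1" "s * t \<in> \<rat>"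
      using ex_rational_multiple_between[of "max b 0" t] \<open>b < 1\<close> by auto
    obtain k where k: "rat_enum k = s * t" using rat_enum_surj[OF s(3)] by blast
    have "a < \<phi> s" using b s by simp
    also have "\<dots> \<le> s * t * v - cgf (s * t)"
      using cgf_scaled_le[OF t, of s] s by (simp add: \<phi>_def)
    also have "\<dots> \<le> Lstar_approx (Suc k) v"
      using cgf_scaled_le[OF t, of s] s k by simp
    finally show ?thesis ..
  qed
  then show ?thesis
  proof (unfold le_SUP_iff, intro allI impI)
    fix y assume "y < ereal (t * v - cgf t)"
    then obtain z where z: "y < ereal z" "ereal z < ereal (t * v - cgf t)"
      using ereal_dense2 by blast
    with * obtain m where "z < Lstar_approx m v" by auto
    with z(1) have "y < ereal (Lstar_approx m v)"
      using less_trans[of y "ereal z"] by simp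
    then show "\<exists>m\<in>UNIV. y < ereal (Lstar_approx m v)" by blast
  qed
qed

lemma Lambda_star_eq_SUP_Lstar_approx: "Lambda_star M v = (SUP m. ereal (Lstar_approx m v))"
proof (rule antisym)
  show "Lambda_star M v \<le> (SUP m. ereal (Lstar_approx m v))"
    unfolding Lambda_star_def
    by (intro SUP_least) (simp add: Lambda_eq_cgf le_SUP_Lstar_approx)
  show "(SUP m. ereal (Lstar_approx m v)) \<le> Lambda_star M v"
    by (intro SUP_least Lstar_approx_le_Lambda_star)
qed

lemma nn_integral_Lstar_approx_square_le:
  "(\<integral>\<^sup>+v. ennreal ((Lstar_approx m v)\<^sup>2) \<partial>M) \<le> ennreal tail_moment_bound"
  by (rule nn_integral_square_le_tail_moment_bound[OF Lstar_approx_nonneg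
        min_tail_le_exp_Lstar_approx])

lemma integrable_Lstar_approx_square: "integrable M (\<lambda>v. (Lstar_approx m v)\<^sup>2)"
proof (rule integrableI_nonneg)
  show "(\<integral>\<^sup>+v. ennreal ((Lstar_approx m v)\<^sup>2) \<partial>M) < \<infinity>"
    by (rule le_less_trans[OF nn_integral_Lstar_approx_square_le]) simp
qed simp_all

lemma expectation_Lstar_approx_square_le:
  "expectation (\<lambda>v. (Lstar_approx m v)\<^sup>2) \<le> tail_moment_bound"
proof -
  have "ennreal (expectation (\<lambda>v. (Lstar_approx m v)\<^sup>2))
      = (\<integral>\<^sup>+v. ennreal ((Lstar_approx m v)\<^sup>2) \<partial>M)"
    by (rule nn_integral_eq_integral[symmetric, OF integrable_Lstar_approx_square]) simp
  also have "\<dots> \<le> ennreal tail_moment_bound"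
    by (rule nn_integral_Lstar_approx_square_le)
  finally show ?thesis
    using ennreal_le_iff tail_moment_bound_ge_1 by force
qed

lemma integrable_Lstar_approx: "integrable M (Lstar_approx m)"
proof (rule Bochner_Integration.integrable_bound)
  show "integrable M (\<lambda>v. 1 + (Lstar_approx m v)\<^sup>2)"
    using integrable_Lstar_approx_square by simp
  show "AE v in M. norm (Lstar_approx m v) \<le> norm (1 + (Lstar_approx m v)\<^sup>2)"
    using le_1_plus_square Lstar_approx_nonneg by (intro AE_I2) simp
qed simp

lemma expectation_Lstar_approx_le: "expectation (Lstar_approx m) \<le> 1 + tail_moment_bound"
proof -
  have "expectation (Lstar_approx m) \<le> expectation (\<lambda>v. 1 + (Lstar_approx m v)\<^sup>2)"
    using integrable_Lstar_approx integrable_Lstar_approx_square le_1_plus_square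
    by (intro integral_mono) auto
  also have "\<dots> = expectation (\<lambda>_. 1) + expectation (\<lambda>v. (Lstar_approx m v)\<^sup>2)"
    by (rule Bochner_Integration.integral_add) (simp_all add: integrable_Lstar_approx_square)
  also have "\<dots> = 1 + expectation (\<lambda>v. (Lstar_approx m v)\<^sup>2)"
    using prob_space by simp
  also have "\<dots> \<le> 1 + tail_moment_bound"
    by (rule add_left_mono[OF expectation_Lstar_approx_square_le])
  finally show ?thesis .
qed

lemma bdd_above_expectation_Lstar_approx: "bdd_above (range (\<lambda>m. expectation (Lstar_approx m)))"
  by (rule bdd_aboveI2[where M="1 + tail_moment_bound"]) (rule expectation_Lstar_approx_le)

lemma E_Lambda_star_eq_SUP: "E_Lambda_star M = ereal (SUP m. expectation (Lstar_approx m))"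
proof -
  have "e2ennreal (Lambda_star M v) = (SUP m. ennreal (Lstar_approx m v))" for v
  proof -
    have "mono (\<lambda>m. ereal (Lstar_approx m v))"
      using incseq_Lstar_approx[of v] by (simp add: mono_def incseq_def)
    from sup_continuousD[OF sup_continuous_e2ennreal[OF sup_continuous_id] this]
    show ?thesis by (simp add: Lambda_star_eq_SUP_Lstar_approx)
  qed
  then have "(\<integral>\<^sup>+v. e2ennreal (Lambda_star M v) \<partial>M)
      = (\<integral>\<^sup>+v. (SUP m. ennreal (Lstar_approx m v)) \<partial>M)"
    by simp
  also have "\<dots> = (SUP m. \<integral>\<^sup>+v. ennreal (Lstar_approx m v) \<partial>M)"
  proof (rule nn_integral_monotone_convergence_SUP)
    show "incseq (\<lambda>m v. ennreal (Lstar_approx m v))"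
      using incseq_Lstar_approx by (auto simp: incseq_def le_fun_def intro!: ennreal_leI)
  qed simp
  also have "\<dots> = (SUP m. ennreal (expectation (Lstar_approx m)))"
    using integrable_Lstar_approx Lstar_approx_nonneg by (simp add: nn_integral_eq_integral)
  also have "\<dots> = ennreal (SUP m. expectation (Lstar_approx m))"
  proof (rule ennreal_SUP[symmetric])
    have "(SUP m. ennreal (expectation (Lstar_approx m))) \<le> ennreal (1 + tail_moment_bound)"
      by (intro SUP_least ennreal_leI expectation_Lstar_approx_le)
    then show "(SUP m. ennreal (expectation (Lstar_approx m))) \<noteq> \<top>"
      using neq_top_trans[OF ennreal_neq_top] by blast
  qed simp
  moreover have "0 \<le> (SUP m. expectation (Lstar_approx m))"
    using cSUP_upper2[OF bdd_above_expectation_Lstar_approx, of 0 0] Lstar_approx_nonneg by simp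
  ultimately show ?thesis by (simp add: E_Lambda_star_def)
qed

lemma E_Lambda_star_finite:
  obtains E where "E_Lambda_star M = ereal E" "0 \<le> E"
proof -
  have "0 \<le> E_Lambda_star M" by (simp add: E_Lambda_star_def)
  then show thesis using that E_Lambda_star_eq_SUP by auto
qed

end

section \<open>Lower tails of sums of independent copies\<close>

lemma (in prob_space) nn_integral_PiM_component:
  assumes "i \<in> I" "g \<in> borel_measurable M"
  shows "(\<integral>\<^sup>+x. g (x i) \<partial>PiM I (\<lambda>_. M)) = (\<integral>\<^sup>+y. g y \<partial>M)"
proof -
  have "(\<integral>\<^sup>+x. g (x i) \<partial>PiM I (\<lambda>_. M)) = (\<integral>\<^sup>+y. g y \<partial>distr (PiM I (\<lambda>_. M)) M (\<lambda>x. x i))"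
    using assms by (simp add: nn_integral_distr)
  also have "\<dots> = (\<integral>\<^sup>+y. g y \<partial>M)"
    using distr_PiM_component[of I "\<lambda>_. M" i] assms(1) prob_space_axioms by simp
  finally show ?thesis .
qed

lemma (in sigma_finite_measure) nn_integral_PiM_prod:
  assumes "finite I" "\<And>i. i \<in> I \<Longrightarrow> f i \<in> borel_measurable M"
  shows "(\<integral>\<^sup>+x. (\<Prod>i\<in>I. f i (x i)) \<partial>PiM I (\<lambda>_. M)) = (\<Prod>i\<in>I. \<integral>\<^sup>+y. f i y \<partial>M)"
proof -
  interpret product_sigma_finite "\<lambda>_. M"
    by (simp add: product_sigma_finite_def sigma_finite_measure_axioms)
  show ?thesis using product_nn_integral_prod[of I f] assms by simp
qed


lemma exp_minus_le_quadratic: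
  fixes u :: real
  assumes "0 \<le> u"
  shows "exp (- u) \<le> 1 - u + u\<^sup>2"
proof -
  have "1 \<le> (1 + u) * (1 - u + u\<^sup>2)"
    using assms by (simp add: algebra_simps power2_eq_square power3_eq_cube)
  then have "1 / (1 + u) \<le> 1 - u + u\<^sup>2"
    using assms by (simp add: divide_le_eq mult.commute)
  moreover have "exp (- u) \<le> 1 / (1 + u)"
    using exp_ge_add_one_self[of u] assms by (simp add: exp_minus inverse_eq_divide frac_le)
  ultimately show ?thesis by linarith
qed

context prob_space
begin

lemma nn_integral_exp_minus_le:
  assumes f: "\<And>x. 0 \<le> f x" "integrable M f" "integrable M (\<lambda>x. (f x)\<^sup>2)" and "0 \<le> l"
  shows "(\<integral>\<^sup>+x. ennreal (exp (- (l * f x))) \<partial>M)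
    \<le> ennreal (exp (- (l * expectation f) + l\<^sup>2 * expectation (\<lambda>x. (f x)\<^sup>2)))"
proof -
  have int_exp: "integrable M (\<lambda>x. exp (- (l * f x)))"
    using f \<open>0 \<le> l\<close> by (intro integrable_const_bound[where B=1]) auto
  have "(\<integral>x. exp (- (l * f x)) \<partial>M) \<le> (\<integral>x. 1 - l * f x + l\<^sup>2 * (f x)\<^sup>2 \<partial>M)"
    using f \<open>0 \<le> l\<close> exp_minus_le_quadratic[of "l * f _"] int_exp
    by (intro integral_mono) (auto simp: power_mult_distrib)
  also have "\<dots> = 1 - l * expectation f + l\<^sup>2 * expectation (\<lambda>x. (f x)\<^sup>2)"
    using f prob_space by simp
  also have "\<dots> \<le> exp (- (l * expectation f) + l\<^sup>2 * expectation (\<lambda>x. (f x)\<^sup>2))"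
    using exp_ge_add_one_self by (metis add_uminus_conv_diff add.assoc)
  finally show ?thesis
    using int_exp by (simp add: nn_integral_eq_integral ennreal_leI)
qed

lemma emeasure_PiM_sum_le:
  assumes [measurable]: "f \<in> borel_measurable M" and "0 \<le> l"
  shows "emeasure (PiM {..<n} (\<lambda>_. M)) {y \<in> space (PiM {..<n} (\<lambda>_. M)). (\<Sum>j<n. f (y j)) \<le> A}
    \<le> ennreal (exp (l * A)) * (\<integral>\<^sup>+x. ennreal (exp (- (l * f x))) \<partial>M) ^ n"
proof -
  let ?P = "PiM {..<n} (\<lambda>_. M)"
  let ?S = "{y \<in> space ?P. (\<Sum>j<n. f (y j)) \<le> A}"
  have markov: "indicator ?S y \<le> ennreal (exp (l * A)) * (\<Prod>j<n. ennreal (exp (- (l * f (y j)))))"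
    for y
  proof -
    have "ennreal (exp (l * A)) * (\<Prod>j<n. ennreal (exp (- (l * f (y j)))))
        = ennreal (exp (l * A) * (\<Prod>j<n. exp (- (l * f (y j)))))"
      by (simp add: prod_ennreal ennreal_mult')
    also have "exp (l * A) * (\<Prod>j<n. exp (- (l * f (y j)))) = exp (l * (A - (\<Sum>j<n. f (y j))))"
      by (simp add: exp_sum[symmetric] exp_add[symmetric] sum_negf sum_distrib_left
          right_diff_distrib)
    finally show ?thesis using \<open>0 \<le> l\<close> by (auto simp: indicator_def)
  qed
  have "emeasure ?P ?S = (\<integral>\<^sup>+y. indicator ?S y \<partial>?P)" by simp
  also have "\<dots> \<le> (\<integral>\<^sup>+y. ennreal (exp (l * A)) * (\<Prod>j<n. ennreal (exp (- (l * f (y j))))) \<partial>?P)"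
    by (intro nn_integral_mono markov)
  also have "\<dots> = ennreal (exp (l * A)) * (\<Prod>j<n. \<integral>\<^sup>+x. ennreal (exp (- (l * f x))) \<partial>M)"
    by (simp add: nn_integral_cmult
        nn_integral_PiM_prod[of "{..<n}" "\<lambda>_ x. ennreal (exp (- (l * f x)))"])
  finally show ?thesis by simp
qed

lemma emeasure_PiM_sum_le_mean_minus:
  assumes f: "f \<in> borel_measurable M" "\<And>x. 0 \<le> f x" "integrable M f" "integrable M (\<lambda>x. (f x)\<^sup>2)"
    and V: "expectation (\<lambda>x. (f x)\<^sup>2) \<le> V" "0 < V" and "0 \<le> s"
  shows "emeasure (PiM {..<n} (\<lambda>_. M))
      {y \<in> space (PiM {..<n} (\<lambda>_. M)). (\<Sum>j<n. f (y j)) \<le> real n * (expectation f - s)}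
    \<le> ennreal (exp (- (real n * s\<^sup>2 / (4 * V))))"
proof -
  define l where "l = s / (2 * V)"
  define c where "c = - (l * expectation f) + l\<^sup>2 * V"
  have "0 \<le> l" using V \<open>0 \<le> s\<close> by (simp add: l_def)
  have "(\<integral>\<^sup>+x. ennreal (exp (- (l * f x))) \<partial>M) \<le> ennreal (exp c)"
    using nn_integral_exp_minus_le[OF f(2-4) \<open>0 \<le> l\<close>] V unfolding c_def
    by (elim order_trans) (intro ennreal_leI exp_mono add_left_mono mult_left_mono; simp)
  then have "emeasure (PiM {..<n} (\<lambda>_. M))
      {y \<in> space (PiM {..<n} (\<lambda>_. M)). (\<Sum>j<n. f (y j)) \<le> real n * (expectation f - s)}
    \<le> ennreal (exp (l * (real n * (expectation f - s)))) * ennreal (exp c) ^ n"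
    by (intro order_trans[OF emeasure_PiM_sum_le[OF f(1) \<open>0 \<le> l\<close>]] mult_left_mono power_mono)
      simp_all
  also have "\<dots> = ennreal (exp (l * (real n * (expectation f - s)) + real n * c))"
    by (simp add: ennreal_mult' ennreal_power exp_add exp_of_nat_mult)
  also have "l * (real n * (expectation f - s)) + real n * c = - (real n * s\<^sup>2 / (4 * V))"
    using V by (simp add: l_def c_def field_simps power2_eq_square)
  finally show ?thesis .
qed

end

section \<open>Random convex hulls\<close>

lemma ex_nonneg_of_convex_combination:
  fixes l c :: "nat \<Rightarrow> real"
  assumes l: "\<And>i. i < N \<Longrightarrow> 0 \<le> l i" "(\<Sum>i<N. l i) = 1" and "0 \<le> (\<Sum>i<N. l i * c i)"
  shows "\<exists>i<N. 0 \<le> c i"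
proof (rule ccontr)
  assume "\<not> ?thesis"
  then have neg: "\<And>i. i < N \<Longrightarrow> c i < 0" by auto
  have "\<exists>i<N. 0 < l i"
  proof (rule ccontr)
    assume "\<not> ?thesis"
    then have "(\<Sum>i<N. l i) \<le> 0" by (intro sum_nonpos) auto
    with l(2) show False by simp
  qed
  then obtain i where "i < N" "0 < l i" by blast
  have "(\<Sum>i<N. l i * c i) < (\<Sum>i<N. 0)"
  proof (rule sum_strict_mono_ex1)
    show "\<forall>j\<in>{..<N}. l j * c j \<le> 0"
      using l(1) neg by (auto intro: mult_nonneg_nonpos less_imp_le)
    show "\<exists>j\<in>{..<N}. l j * c j < 0"
      using \<open>i < N\<close> \<open>0 < l i\<close> neg[of i] by (auto intro!: bexI[of _ i] mult_pos_neg)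
  qed simp
  with \<open>0 \<le> (\<Sum>i<N. l i * c i)\<close> show False by simp
qed

lemma one_le_sum_exp_if_mem_KN:
  fixes T :: "nat \<Rightarrow> real"
  assumes "y \<in> KN n N X"
  shows "1 \<le> (\<Sum>i<N. exp (\<Sum>j<n. T j * (X i j - y j)))"
proof -
  obtain l where l: "\<forall>i<N. 0 \<le> l i" "(\<Sum>i<N. l i) = 1" and y: "\<forall>j<n. y j = (\<Sum>i<N. l i * X i j)"
    using assms unfolding KN_def by blast
  have "(\<Sum>i<N. l i * (\<Sum>j<n. T j * (X i j - y j)))
      = (\<Sum>i<N. \<Sum>j<n. l i * (T j * (X i j - y j)))"
    by (simp add: sum_distrib_left)
  also have "\<dots> = (\<Sum>j<n. \<Sum>i<N. l i * (T j * (X i j - y j)))"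
    by (rule sum.swap)
  also have "\<dots> = (\<Sum>j<n. T j * ((\<Sum>i<N. l i * X i j) - (\<Sum>i<N. l i) * y j))"
    by (intro sum.cong refl)
      (simp add: sum_distrib_left sum_distrib_right sum_subtractf algebra_simps)
  also have "\<dots> = 0" using y l(2) by simp
  finally have "\<exists>i<N. 0 \<le> (\<Sum>j<n. T j * (X i j - y j))"
    using l by (intro ex_nonneg_of_convex_combination[of N l]) simp_all
  then obtain i where "i < N" "0 \<le> (\<Sum>j<n. T j * (X i j - y j))" by blast
  then have "1 \<le> exp (\<Sum>j<n. T j * (X i j - y j))" by simp
  also have "\<dots> \<le> (\<Sum>i<N. exp (\<Sum>j<n. T j * (X i j - y j)))"
    by (rule member_le_sum) (use \<open>i < N\<close> in simp_all)
  finally show ?thesis .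
qed

context real_distribution
begin

lemma prob_space_mu_n: "prob_space (mu_n M n)"
  unfolding mu_n_def by (intro prob_space_PiM prob_space_axioms)

lemma nn_integral_exp_tilt:
  assumes TL: "\<And>v. mgf_finite (T v) \<and> L v = T v * v - cgf (T v)"
  shows "(\<integral>\<^sup>+z. ennreal (exp (\<Sum>j<n. T (y j) * (z j - y j))) \<partial>mu_n M n)
    = ennreal (exp (- (\<Sum>j<n. L (y j))))"
proof -
  have "(\<integral>\<^sup>+z. ennreal (exp (\<Sum>j<n. T (y j) * (z j - y j))) \<partial>mu_n M n)
      = (\<integral>\<^sup>+z. (\<Prod>j<n. ennreal (exp (T (y j) * (z j - y j)))) \<partial>mu_n M n)"
    by (simp add: exp_sum prod_ennreal)
  also have "\<dots> = (\<Prod>j<n. \<integral>\<^sup>+w. ennreal (exp (T (y j) * (w - y j))) \<partial>M)"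
    unfolding mu_n_def by (rule nn_integral_PiM_prod) auto
  also have "\<dots> = (\<Prod>j<n. ennreal (exp (- L (y j))))"
    using TL by (simp add: nn_integral_exp_shift)
  also have "\<dots> = ennreal (exp (- (\<Sum>j<n. L (y j))))"
    by (simp add: prod_ennreal exp_sum flip: sum_negf)
  finally show ?thesis .
qed

lemma EK_le:
  assumes [measurable]: "T \<in> borel_measurable borel" "L \<in> borel_measurable borel"
    and TL: "\<And>v. mgf_finite (T v) \<and> L v = T v * v - cgf (T v)"
  shows "EK M n N \<le> emeasure (mu_n M n) {y \<in> space (mu_n M n). (\<Sum>j<n. L (y j)) \<le> a}
    + of_nat N * ennreal (exp (- a))"
proof -
  define Mn where "Mn = mu_n M n"
  define P where "P = PiM {..<N} (\<lambda>_. Mn)"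
  define S where "S y = (\<Sum>j<n. L (y j))" for y :: "nat \<Rightarrow> real"
  define B where "B = {y \<in> space Mn. S y \<le> a}"
  (* If S y > a, then the sum of h y (X i) over i is at least 1 when y lies in K_N,
     and h y integrates to exp (- S y). *)
  define h where "h y z = (if S y \<le> a then 0 else ennreal (exp (\<Sum>j<n. T (y j) * (z j - y j))))"
    for y z :: "nat \<Rightarrow> real"
  define g where "g X y = indicator B y + (\<Sum>i<N. h y (X i))" for X y
  interpret Mn: prob_space Mn unfolding Mn_def by (rule prob_space_mu_n)
  interpret P: prob_space P unfolding P_def by (intro prob_space_PiM Mn.prob_space_axioms)
  interpret PM: pair_sigma_finite P Mn by unfold_locales
  have [measurable]: "B \<in> sets Mn" unfolding B_def S_def Mn_def mu_n_def by measurable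
  have [measurable]: "case_prod h \<in> borel_measurable (Mn \<Otimes>\<^sub>M Mn)"
    unfolding h_def S_def Mn_def mu_n_def by measurable
  have g_meas: "case_prod g \<in> borel_measurable (P \<Otimes>\<^sub>M Mn)"
    unfolding g_def P_def by measurable
  have cover: "indicator (KN n N X) y \<le> g X y" if "y \<in> space Mn" for X y
  proof (cases "y \<in> KN n N X \<and> \<not> S y \<le> a")
    case True
    then have "ennreal 1 \<le> ennreal (\<Sum>i<N. exp (\<Sum>j<n. T (y j) * (X i j - y j)))"
      using one_le_sum_exp_if_mem_KN[where T="\<lambda>j. T (y j)"] by (intro ennreal_leI) simp
    also have "\<dots> = (\<Sum>i<N. h y (X i))" using True by (simp add: h_def sum_ennreal)
    also have "\<dots> \<le> g X y" by (simp add: g_def)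
    finally show ?thesis by (simp add: indicator_def)
  next
    case False
    then show ?thesis using that by (auto simp: g_def B_def indicator_def)
  qed
  have marginal: "(\<integral>\<^sup>+X. g X y \<partial>P) \<le> indicator B y + of_nat N * ennreal (exp (- a))" for y
  proof -
    have h_bound: "(\<integral>\<^sup>+z. h y z \<partial>Mn) \<le> ennreal (exp (- a))"
    proof (cases "S y \<le> a")
      case False
      then have "(\<integral>\<^sup>+z. h y z \<partial>Mn) = ennreal (exp (- S y))"
        unfolding h_def S_def Mn_def by (simp add: nn_integral_exp_tilt[OF TL])
      also have "\<dots> \<le> ennreal (exp (- a))" using False by (intro ennreal_leI) simp
      finally show ?thesis .
    qed (simp add: h_def)
    have h_y: "h y \<in> borel_measurable Mn" unfolding h_def Mn_def mu_n_def by measurable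
    then have hX: "(\<lambda>X. h y (X i)) \<in> borel_measurable P" if "i \<in> {..<N}" for i
      unfolding P_def using that by (intro measurable_compose[OF measurable_component_singleton])
    have ind: "(\<integral>\<^sup>+X. indicator B y \<partial>P) = indicator B y"
      by (simp add: P.emeasure_space_1)
    have sum: "(\<integral>\<^sup>+X. (\<Sum>i<N. h y (X i)) \<partial>P) = (\<Sum>i<N. \<integral>\<^sup>+X. h y (X i) \<partial>P)"
      by (rule nn_integral_sum) (use hX in simp_all)
    have "(\<integral>\<^sup>+X. g X y \<partial>P) = (\<integral>\<^sup>+X. indicator B y \<partial>P) + (\<integral>\<^sup>+X. (\<Sum>i<N. h y (X i)) \<partial>P)"
      unfolding g_def using hX by (intro nn_integral_add) auto
    also have "\<dots> = indicator B y + (\<Sum>i<N. \<integral>\<^sup>+X. h y (X i) \<partial>P)"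
      unfolding ind sum ..
    also have "(\<Sum>i<N. \<integral>\<^sup>+X. h y (X i) \<partial>P) = (\<Sum>i<N. \<integral>\<^sup>+z. h y z \<partial>Mn)"
      unfolding P_def by (intro sum.cong refl Mn.nn_integral_PiM_component h_y)
    also have "indicator B y + \<dots> = indicator B y + of_nat N * (\<integral>\<^sup>+z. h y z \<partial>Mn)"
      by simp
    also have "\<dots> \<le> indicator B y + of_nat N * ennreal (exp (- a))"
      by (intro add_left_mono mult_left_mono h_bound) simp
    finally show ?thesis .
  qed
  have "EK M n N = (\<integral>\<^sup>+X. emeasure Mn (KN n N X) \<partial>P)"
    by (simp add: EK_def P_def Mn_def)
  also have "\<dots> \<le> (\<integral>\<^sup>+X. (\<integral>\<^sup>+y. g X y \<partial>Mn) \<partial>P)"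
  proof (intro nn_integral_mono)
    fix X
    show "emeasure Mn (KN n N X) \<le> (\<integral>\<^sup>+y. g X y \<partial>Mn)"
    proof (cases "KN n N X \<in> sets Mn")
      case True
      then have "emeasure Mn (KN n N X) = (\<integral>\<^sup>+y. indicator (KN n N X) y \<partial>Mn)" by simp
      also have "\<dots> \<le> (\<integral>\<^sup>+y. g X y \<partial>Mn)" by (intro nn_integral_mono cover)
      finally show ?thesis .
    qed (simp add: emeasure_notin_sets)
  qed
  also have "\<dots> = (\<integral>\<^sup>+y. (\<integral>\<^sup>+X. g X y \<partial>P) \<partial>Mn)"
    by (rule PM.Fubini'[OF g_meas, symmetric])
  also have "\<dots> \<le> (\<integral>\<^sup>+y. indicator B y + of_nat N * ennreal (exp (- a)) \<partial>Mn)"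
    by (intro nn_integral_mono marginal)
  also have "\<dots> = emeasure Mn B + of_nat N * ennreal (exp (- a))"
    by (simp add: nn_integral_add Mn.emeasure_space_1)
  finally show ?thesis by (simp add: B_def S_def Mn_def)
qed

end

section \<open>The threshold rho1\<close>

lemma rho1_ge:
  assumes "\<And>N. n < N \<Longrightarrow> real N \<le> exp (r * real n) \<Longrightarrow> EK M n N \<le> ennreal d"
  shows "ereal r \<le> rho1 M n d"
  unfolding rho1_def using assms by (intro Sup_upper) (auto intro!: SUP_least)

lemma rho1_nonneg:
  assumes "0 < n"
  shows "0 \<le> rho1 M n d"
  using rho1_ge[of n 0 M d] assms by (simp add: zero_ereal_def)

context real_distribution
begin

lemma rho1_ge_expectation_Lstar_approx:
  assumes "0 < s" "0 < \<delta>"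
    and concentration: "ln (2 / \<delta>) \<le> real n * s\<^sup>2 / (4 * tail_moment_bound)"
    and separation: "ln (2 / \<delta>) \<le> real n * s"
  shows "ereal (expectation (Lstar_approx m) - 2 * s) \<le> rho1 M n \<delta>"
proof (rule rho1_ge)
  fix N assume "n < N" and N: "real N \<le> exp ((expectation (Lstar_approx m) - 2 * s) * real n)"
  define a where "a = real n * (expectation (Lstar_approx m) - s)"
  have half: "exp (- ln (2 / \<delta>)) = \<delta> / 2" using \<open>0 < \<delta>\<close> by (simp add: exp_minus)
  have "emeasure (mu_n M n) {y \<in> space (mu_n M n). (\<Sum>j<n. Lstar_approx m (y j)) \<le> a}
      \<le> ennreal (exp (- (real n * s\<^sup>2 / (4 * tail_moment_bound))))"
    unfolding mu_n_def a_def
    using tail_moment_bound_ge_1 \<open>0 < s\<close> Lstar_approx_nonneg integrable_Lstar_approx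
      integrable_Lstar_approx_square expectation_Lstar_approx_square_le
    by (intro emeasure_PiM_sum_le_mean_minus) auto
  also have "\<dots> \<le> ennreal (\<delta> / 2)"
    using concentration by (simp flip: half)
  finally have first: "emeasure (mu_n M n) {y \<in> space (mu_n M n). (\<Sum>j<n. Lstar_approx m (y j)) \<le> a}
      \<le> ennreal (\<delta> / 2)" .
  have "real N * exp (- a) \<le> exp ((expectation (Lstar_approx m) - 2 * s) * real n) * exp (- a)"
    using N by (intro mult_right_mono) simp_all
  also have "\<dots> = exp (- (real n * s))"
    by (simp add: a_def algebra_simps flip: exp_add)
  also have "\<dots> \<le> \<delta> / 2"
    using separation by (simp flip: half)
  finally have second: "of_nat N * ennreal (exp (- a)) \<le> ennreal (\<delta> / 2)"
    by (simp add: ennreal_of_nat_eq_real_of_nat ennreal_leI flip: ennreal_mult')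
  have "EK M n N \<le> emeasure (mu_n M n) {y \<in> space (mu_n M n). (\<Sum>j<n. Lstar_approx m (y j)) \<le> a}
      + of_nat N * ennreal (exp (- a))"
    by (rule EK_le[OF _ _ Lstar_approx_attained]) simp_all
  also have "\<dots> \<le> ennreal (\<delta> / 2) + ennreal (\<delta> / 2)"
    by (rule add_mono[OF first second])
  also have "\<dots> = ennreal \<delta>"
    using \<open>0 < \<delta>\<close> by (simp flip: ennreal_plus)
  finally show "EK M n N \<le> ennreal \<delta>" .
qed

lemma ex_rho1_ge_E_Lambda_star_minus:
  assumes E: "E_Lambda_star M = ereal E" and "0 < \<delta>" "\<delta> < 1"
  obtains K where "0 < K" "\<And>n. 0 < n \<Longrightarrow> ereal (E - K / sqrt n) \<le> rho1 M n \<delta>"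
proof -
  define C where "C = 1 + 4 * tail_moment_bound * ln (2 / \<delta>)"
  have "0 < ln (2 / \<delta>)" using \<open>0 < \<delta>\<close> \<open>\<delta> < 1\<close> by simp
  then have "ln (2 / \<delta>) \<le> 4 * tail_moment_bound * ln (2 / \<delta>)"
    using mult_right_mono[of 1 "4 * tail_moment_bound" "ln (2 / \<delta>)"] tail_moment_bound_ge_1 by simp
  then have C: "4 * tail_moment_bound * ln (2 / \<delta>) \<le> C" "1 \<le> C" "ln (2 / \<delta>) \<le> C"
    using \<open>0 < ln (2 / \<delta>)\<close> unfolding C_def by linarith+
  have "ereal (E - (2 * C + 1) / sqrt n) \<le> rho1 M n \<delta>" if "0 < n" for n
  proof -
    define q where "q = sqrt n"
    have q: "1 \<le> q" "real n = q\<^sup>2" using \<open>0 < n\<close> by (simp_all add: q_def)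
    have "E = (SUP m. expectation (Lstar_approx m))" using E E_Lambda_star_eq_SUP by simp
    then obtain m where m: "E - 1 / q < expectation (Lstar_approx m)"
      using less_cSUP_iff[OF _ bdd_above_expectation_Lstar_approx, of "E - 1 / q"] q(1) by auto
    have "ereal (expectation (Lstar_approx m) - 2 * (C / q)) \<le> rho1 M n \<delta>"
    proof (rule rho1_ge_expectation_Lstar_approx)
      have "C \<le> C * C" using C(2) mult_right_mono[of 1 C C] by simp
      then have "4 * tail_moment_bound * ln (2 / \<delta>) \<le> C * C" using C(1) by linarith
      moreover have "real n * (C / q)\<^sup>2 = C * C" using q by (simp add: field_simps power2_eq_square)
      ultimately show "ln (2 / \<delta>) \<le> real n * (C / q)\<^sup>2 / (4 * tail_moment_bound)"
        using tail_moment_bound_ge_1 by (simp add: pos_le_divide_eq mult.commute)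
      have "C \<le> q * C" using C(2) q(1) mult_right_mono[of 1 q C] by simp
      moreover have "real n * (C / q) = q * C" using q by (simp add: field_simps power2_eq_square)
      ultimately show "ln (2 / \<delta>) \<le> real n * (C / q)" using C(3) by linarith
    qed (use C(2) q(1) \<open>0 < \<delta>\<close> in auto)
    moreover have "E - (2 * C + 1) / q \<le> expectation (Lstar_approx m) - 2 * (C / q)"
      using m by (simp add: add_divide_distrib)
    ultimately show ?thesis unfolding q_def by (meson ereal_less_eq(3) order_trans)
  qed
  moreover have "0 < 2 * C + 1" using C(2) by simp
  ultimately show thesis using that by blast
qed

end

theorem theorem3p1:
  fixes \<mu> :: "real measure" and \<delta> :: real
  assumes "prob_space \<mu>" and "sets \<mu> = sets borel"
    and "admissible \<mu>" and "even_measure \<mu>"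
    and "0 < \<delta>" and "\<delta> < 1/2"
  shows "\<exists>c>0. \<exists>n0::nat. \<forall>n\<ge>n0.
           rho1 \<mu> n \<delta> \<ge> ereal (1 - c / sqrt (real n)) * E_Lambda_star \<mu>"
proof -
  interpret real_distribution \<mu>
    using assms(1,2) by (simp add: real_distribution_def real_distribution_axioms_def)
  obtain E where E: "E_Lambda_star \<mu> = ereal E" "0 \<le> E" by (rule E_Lambda_star_finite)
  obtain K where K: "0 < K" "\<And>n. 0 < n \<Longrightarrow> ereal (E - K / sqrt n) \<le> rho1 \<mu> n \<delta>"
    using ex_rho1_ge_E_Lambda_star_minus[OF E(1) assms(5)] assms(6) by auto
  show ?thesis
  proof (cases "E = 0")
    case True
    then show ?thesis using E rho1_nonneg[of _ \<mu> \<delta>]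
      by (intro exI[of _ 1] conjI exI[of _ "1::nat"] allI impI) (auto simp flip: zero_ereal_def)
  next
    case False
    show ?thesis
    proof (intro exI[of _ "K / E"] exI[of _ 1] allI impI conjI)
      show "0 < K / E" using K(1) E(2) False by simp
      fix n :: nat assume "1 \<le> n"
      have "ereal (1 - K / E / sqrt n) * E_Lambda_star \<mu> = ereal (E - K / sqrt n)"
        using False by (simp add: E field_simps)
      also have "\<dots> \<le> rho1 \<mu> n \<delta>" using K(2) \<open>1 \<le> n\<close> by simp
      finally show "ereal (1 - K / E / sqrt n) * E_Lambda_star \<mu> \<le> rho1 \<mu> n \<delta>" .
    qed
  qed
qed

end
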